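(* Let $T$ be a tree and $c$ a caret of $T$, corresponding to the interval $I$. Then there is a tree $T'$, obtained from $T$ by attaching at most one new caret to a leaf and then performing a finite sequence of basic moves, in which the vertex corresponding to $I$ carries a caret of the type opposite to that of $c$ (i.e. $c$ can be switched from $x$-type to $y$-type or vice versa by adding at most one caret).
   Context: Let $\tau=(\sqrt5-1)/2$, so $\tau^2+\tau=1$. A tree is a finite rooted binary tree whose carets (non-leaf vertex with its two children) are each labelled $x$-type or $y$-type. Vertices correspond to subintervals of $[0,1]$: the root to $[0,1]$; if a vertex corresponds to $[p,p+\tau^k]$, an $x$-type caret there gives children $[p,p+\tau^{k+2}]$ (left) and $[p+\tau^{k+2},p+\tau^k]$ (right), and a $y$-type caret gives $[p,p+\tau^{k+1}]$ (left) and $[p+\tau^{k+1},p+\tau^k]$ (right). A basic move replaces, at some vertex of a tree, an $x$-type caret whose right child carries an $x$-type caret by a $y$-type caret whose left child carries a $y$-type caret (keeping the three subtrees hanging below, in the same left-to-right order), or performs the reverse replacement; both configurations subdivide an interval of length $\tau^k$ into consecutive intervals of lengths $\tau^{k+2},\tau^{k+3},\tau^{k+2}$, so a basic move does not change the subdivision into leaf intervals. *)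

theory Defs
  imports Complex_Main
begin

definition tau :: real where "tau = (sqrt 5 - 1) / 2"

datatype ctype = XT | YT

fun opp :: "ctype \<Rightarrow> ctype" where
  "opp XT = YT" | "opp YT = XT"

datatype tree = Leaf | Node ctype tree tree

text \<open>An interval [p, p + tau^k] is represented by the pair (p, k).
  child_int c b J: interval of the left (b = False) / right (b = True) child
  of a vertex with interval J carrying a caret of type c.\<close>
fun child_int :: "ctype \<Rightarrow> bool \<Rightarrow> real \<times> nat \<Rightarrow> real \<times> nat" where
  "child_int XT False (p, k) = (p, k + 2)"
| "child_int XT True (p, k) = (p + tau ^ (k + 2), k + 1)"
| "child_int YT False (p, k) = (p, k + 1)"
| "child_int YT True (p, k) = (p + tau ^ (k + 1), k + 2)"

fun carets :: "real \<times> nat \<Rightarrow> tree \<Rightarrow> ((real \<times> nat) \<times> ctype) set" where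
  "carets J Leaf = {}"
| "carets J (Node c l r) =
     insert (J, c) (carets (child_int c False J) l \<union> carets (child_int c True J) r)"

definition tree_carets :: "tree \<Rightarrow> ((real \<times> nat) \<times> ctype) set" where
  "tree_carets T = carets (0, 0) T"

inductive add_caret :: "tree \<Rightarrow> tree \<Rightarrow> bool" where
  leaf: "add_caret Leaf (Node c Leaf Leaf)"
| left: "add_caret l l' \<Longrightarrow> add_caret (Node c l r) (Node c l' r)"
| right: "add_caret r r' \<Longrightarrow> add_caret (Node c l r) (Node c l r')"

inductive basic_move :: "tree \<Rightarrow> tree \<Rightarrow> bool" where
  xy: "basic_move (Node XT a (Node XT b c)) (Node YT (Node YT a b) c)"
| yx: "basic_move (Node YT (Node YT a b) c) (Node XT a (Node XT b c))"
| left: "basic_move l l' \<Longrightarrow> basic_move (Node t l r) (Node t l' r)"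
| right: "basic_move r r' \<Longrightarrow> basic_move (Node t l r) (Node t l r')"

end

theory Submission
  imports Defs
begin

text \<open>Every tree can be brought, by adding at most one caret and then basic moves, to a tree
  whose root carries a caret of any prescribed type. At a leaf one adds that caret. To turn an
  \<open>x\<close>-type root into a \<open>y\<close>-type one, first make the root of the right subtree \<open>x\<close>-type
  (recursively) and then apply the basic move \<open>x(a, x(b, c)) \<mapsto> y(y(a, b), c)\<close>; the other
  direction is symmetric, using the left subtree. Only one recursive call is made per level, so at
  most one caret is added in total. A caret at an inner vertex is switched in the same way inside
  the corresponding subtree.\<close>

definition caret_then_moves :: "tree \<Rightarrow> tree \<Rightarrow> bool" where
  "caret_then_moves T T' \<longleftrightarrow> (\<exists>T0. (T0 = T \<or> add_caret T T0) \<and> basic_move\<^sup>*\<^sup>* T0 T')"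

lemma basic_moves_Node_left:
  "basic_move\<^sup>*\<^sup>* l l' \<Longrightarrow> basic_move\<^sup>*\<^sup>* (Node t l r) (Node t l' r)"
  by (induction rule: rtranclp_induct) (auto intro: rtranclp.rtrancl_into_rtrancl basic_move.left)

lemma basic_moves_Node_right:
  "basic_move\<^sup>*\<^sup>* r r' \<Longrightarrow> basic_move\<^sup>*\<^sup>* (Node t l r) (Node t l r')"
  by (induction rule: rtranclp_induct) (auto intro: rtranclp.rtrancl_into_rtrancl basic_move.right)

lemma caret_then_moves_refl: "caret_then_moves T T"
  by (auto simp: caret_then_moves_def)

lemma caret_then_moves_Leaf: "caret_then_moves Leaf (Node c Leaf Leaf)"
  by (auto simp: caret_then_moves_def intro: add_caret.leaf)

lemma caret_then_moves_basic_move: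
  "caret_then_moves T T' \<Longrightarrow> basic_move T' T'' \<Longrightarrow> caret_then_moves T T''"
  by (auto simp: caret_then_moves_def intro: rtranclp.rtrancl_into_rtrancl)

lemma caret_then_moves_Node_left:
  assumes "caret_then_moves l l'"
  shows "caret_then_moves (Node t l r) (Node t l' r)"
proof -
  obtain l0 where "l0 = l \<or> add_caret l l0" and "basic_move\<^sup>*\<^sup>* l0 l'"
    using assms by (auto simp: caret_then_moves_def)
  then have "Node t l0 r = Node t l r \<or> add_caret (Node t l r) (Node t l0 r)"
    and "basic_move\<^sup>*\<^sup>* (Node t l0 r) (Node t l' r)"
    by (auto intro: add_caret.left basic_moves_Node_left)
  then show ?thesis
    by (auto simp: caret_then_moves_def)
qed

lemma caret_then_moves_Node_right:
  assumes "caret_then_moves r r'"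
  shows "caret_then_moves (Node t l r) (Node t l r')"
proof -
  obtain r0 where "r0 = r \<or> add_caret r r0" and "basic_move\<^sup>*\<^sup>* r0 r'"
    using assms by (auto simp: caret_then_moves_def)
  then have "Node t l r0 = Node t l r \<or> add_caret (Node t l r) (Node t l r0)"
    and "basic_move\<^sup>*\<^sup>* (Node t l r0) (Node t l r')"
    by (auto intro: add_caret.right basic_moves_Node_right)
  then show ?thesis
    by (auto simp: caret_then_moves_def)
qed

lemma caret_then_moves_XT_to_YT:
  assumes "caret_then_moves r (Node XT b c)"
  shows "caret_then_moves (Node XT a r) (Node YT (Node YT a b) c)"
  using caret_then_moves_basic_move[OF caret_then_moves_Node_right[OF assms] basic_move.xy] .

lemma caret_then_moves_YT_to_XT:
  assumes "caret_then_moves l (Node YT a b)"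
  shows "caret_then_moves (Node YT l c) (Node XT a (Node XT b c))"
  using caret_then_moves_basic_move[OF caret_then_moves_Node_left[OF assms] basic_move.yx] .

lemma caret_then_moves_root_type: "\<exists>l' r'. caret_then_moves T (Node c l' r')"
proof (induction T arbitrary: c)
  case Leaf
  show ?case
    using caret_then_moves_Leaf by blast
next
  case (Node c' l r)
  show ?case
  proof (cases "c' = c")
    case True
    then show ?thesis
      using caret_then_moves_refl by blast
  next
    case False
    show ?thesis
    proof (cases c')
      case XT
      with Node.IH(2) obtain b d where "caret_then_moves r (Node XT b d)"
        by blast
      with XT False show ?thesis
        using caret_then_moves_XT_to_YT ctype.exhaust by metis
    next
      case YT
      with Node.IH(1) obtain a b where "caret_then_moves l (Node YT a b)"
        by blast
      with YT False show ?thesis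
        using caret_then_moves_YT_to_XT ctype.exhaust by metis
    qed
  qed
qed

lemma caret_then_moves_switch_caret:
  "(I, c) \<in> carets K T \<Longrightarrow> \<exists>T'. caret_then_moves T T' \<and> (I, opp c) \<in> carets K T'"
proof (induction T arbitrary: K)
  case Leaf
  then show ?case
    by simp
next
  case (Node c' l r)
  consider "I = K" "c = c'" | "(I, c) \<in> carets (child_int c' False K) l"
    | "(I, c) \<in> carets (child_int c' True K) r"
    using Node.prems by auto
  then show ?case
  proof cases
    case 1
    then show ?thesis
      using caret_then_moves_root_type[of "Node c' l r" "opp c"] by fastforce
  next
    case 2
    then show ?thesis
      using Node.IH(1) caret_then_moves_Node_left by fastforce
  next
    case 3
    then show ?thesis
      using Node.IH(2) caret_then_moves_Node_right by fastforce
  qed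
qed

theorem mainTheorem14:
  fixes T :: tree and I :: "real \<times> nat" and c :: ctype
  assumes "(I, c) \<in> tree_carets T"
  shows "\<exists>T0 T'. (T0 = T \<or> add_caret T T0) \<and> basic_move\<^sup>*\<^sup>* T0 T'
                \<and> (I, opp c) \<in> tree_carets T'"
  using caret_then_moves_switch_caret[of I c "(0, 0)" T] assms
  unfolding tree_carets_def caret_then_moves_def by blast

end
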